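(* Let $G$ be a finite non-abelian exponent-critical group whose order is divisible by three distinct primes. Then $G$ has a non-trivial central cyclic Sylow subgroup, and all Sylow subgroups of $G$ are abelian.
   Context: A finite group $G$ is exponent-critical if $\exp(G)$ is not the least common multiple of the exponents of the proper non-abelian subgroups of $G$. *)

theory Defs
  imports "HOL-Algebra.Algebra"
begin

definition grp_exponent :: "('a, 'b) monoid_scheme \<Rightarrow> nat" where
  "grp_exponent G = Lcm (group.ord G ` carrier G)"

definition proper_nonabelian_subgroups :: "('a, 'b) monoid_scheme \<Rightarrow> 'a set set" where
  "proper_nonabelian_subgroups G =
     {H. subgroup H G \<and> H \<noteq> carrier G \<and> \<not> comm_group (G\<lparr>carrier := H\<rparr>)}"

definition exponent_critical :: "('a, 'b) monoid_scheme \<Rightarrow> bool" where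
  "exponent_critical G \<longleftrightarrow>
     grp_exponent G \<noteq>
       Lcm ((\<lambda>H. grp_exponent (G\<lparr>carrier := H\<rparr>)) ` proper_nonabelian_subgroups G)"

definition sylow_subgroup :: "('a, 'b) monoid_scheme \<Rightarrow> nat \<Rightarrow> 'a set \<Rightarrow> bool" where
  "sylow_subgroup G p P \<longleftrightarrow>
     Factorial_Ring.prime p \<and> subgroup P G \<and> card P = p ^ multiplicity p (order G)"

definition central_subset :: "('a, 'b) monoid_scheme \<Rightarrow> 'a set \<Rightarrow> bool" where
  "central_subset G P \<longleftrightarrow> (\<forall>x\<in>P. \<forall>y\<in>carrier G. x \<otimes>\<^bsub>G\<^esub> y = y \<otimes>\<^bsub>G\<^esub> x)"

end

theory Submission
  imports Defs
begin

text \<open>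
  Let L be the lcm of the exponents of the proper non-abelian subgroups. As exp(G) is not L,
  some element y has order p^e with p^e not dividing L, and every proper subgroup containing an
  element whose order does not divide L is abelian. The core of the proof is that such an element
  y of prime power order is central. Otherwise its centralizer C is abelian and contains every
  proper subgroup through y, so either C is normal or C is self-normalizing. In the first case the
  Sylow p-subgroup P inside C is normal, and P T is a proper subgroup through y for each Sylow
  t-subgroup T with t different from p, because a third prime divides the order of G; hence T lies
  in C. In the second case P controls its own fusion, so Burnside's transfer theorem gives a normal
  p-complement, and a Frattini argument yields a Sylow t-subgroup normalized by y, which again lies
  in C. Thus C contains a Sylow subgroup for every prime and C = G.

  Applied to y and to the products w y, this shows that the Sylow p-subgroup P through y is central.
  Burnside's theorem gives a normal complement M; if M <y> were proper it would be abelian and then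
  so would be G = M P. Hence P = <y> is cyclic, and every Sylow t-subgroup Q lies in the proper,
  hence abelian, subgroup Q <y>.
\<close>

section \<open>Conjugate subsets, centralizers and products of subgroups\<close>

context group begin

lemma inv_mult_cancel_left [simp]:
  "x \<in> carrier G \<Longrightarrow> y \<in> carrier G \<Longrightarrow> inv x \<otimes> (x \<otimes> y) = y"
  by (simp flip: m_assoc)

lemma mult_inv_cancel_left [simp]:
  "x \<in> carrier G \<Longrightarrow> y \<in> carrier G \<Longrightarrow> x \<otimes> (inv x \<otimes> y) = y"
  by (simp flip: m_assoc)

lemma comm_group_subgroup_iff:
  assumes "subgroup K G"
  shows "comm_group (G\<lparr>carrier := K\<rparr>) \<longleftrightarrow> (\<forall>a\<in>K. \<forall>b\<in>K. a \<otimes> b = b \<otimes> a)"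
proof
  assume "comm_group (G\<lparr>carrier := K\<rparr>)"
  then interpret K: comm_group "G\<lparr>carrier := K\<rparr>" .
  show "\<forall>a\<in>K. \<forall>b\<in>K. a \<otimes> b = b \<otimes> a"
    using K.m_comm by simp
next
  assume "\<forall>a\<in>K. \<forall>b\<in>K. a \<otimes> b = b \<otimes> a"
  then show "comm_group (G\<lparr>carrier := K\<rparr>)"
    using subgroup_imp_group[OF assms] by (intro group.group_comm_groupI) auto
qed

lemma ord_subgroup:
  assumes "subgroup H G"
  shows "group.ord (G\<lparr>carrier := H\<rparr>) x = ord x"
  unfolding group.ord_def[OF subgroup_imp_group[OF assms]] ord_def by (simp add: nat_pow_def)

lemma card_subgroup_dvd:
  assumes "subgroup H G" "subgroup K G" "H \<subseteq> K"
  shows "card H dvd card K"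
proof -
  interpret K: group "G\<lparr>carrier := K\<rparr>"
    using subgroup_imp_group[OF assms(2)] .
  have "card (rcosets\<^bsub>G\<lparr>carrier := K\<rparr>\<^esub> H) * card H = card K"
    using K.lagrange[OF subgroup_incl[OF assms]] by (simp add: order_def)
  then show ?thesis
    by (metis dvd_triv_right)
qed

definition centralizer :: "'a \<Rightarrow> 'a set" where
  "centralizer y = {x \<in> carrier G. x \<otimes> y = y \<otimes> x}"

lemma subgroup_centralizer:
  assumes "y \<in> carrier G"
  shows "subgroup (centralizer y) G"
proof (rule subgroupI)
  fix a assume "a \<in> centralizer y"
  then have a: "a \<in> carrier G" "a \<otimes> y = y \<otimes> a"
    by (auto simp: centralizer_def)
  have "inv a \<otimes> y = inv a \<otimes> (y \<otimes> a) \<otimes> inv a"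
    using a assms by (simp add: m_assoc)
  also have "\<dots> = y \<otimes> inv a"
    using a assms by (simp flip: a(2) add: m_assoc)
  finally show "inv a \<in> centralizer y"
    using a by (simp add: centralizer_def)
next
  fix a b assume "a \<in> centralizer y" "b \<in> centralizer y"
  then show "a \<otimes> b \<in> centralizer y"
    using assms by (simp add: centralizer_def m_assoc) (metis m_assoc)
qed (use assms in \<open>auto simp: centralizer_def\<close>)

lemma conj_image: "g <# K #> h = (\<lambda>k. g \<otimes> k \<otimes> h) ` K"
  unfolding l_coset_def r_coset_def by auto

lemma subgroup_conj:
  assumes "subgroup K G" "g \<in> carrier G"
  shows "subgroup (g <# K #> inv g) G"
  using subgroup_conjugation_is_surj1[of "inv g" K] assms by simp

lemma card_conj:
  assumes "K \<subseteq> carrier G" "g \<in> carrier G"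
  shows "card (g <# K #> inv g) = card K"
proof -
  have "inj_on (\<lambda>k. g \<otimes> k \<otimes> inv g) K"
    by (rule inj_onI) (use assms conjugation_is_inj in blast)
  then show ?thesis
    unfolding conj_image by (rule card_image)
qed

lemma conj_conj:
  assumes "K \<subseteq> carrier G" "a \<in> carrier G" "b \<in> carrier G"
  shows "a <# (b <# K #> inv b) #> inv a = (a \<otimes> b) <# K #> inv (a \<otimes> b)"
  unfolding conj_image image_image using assms
  by (intro image_cong) (auto simp: inv_mult_group m_assoc dest!: subsetD)

lemma mem_conj_iff:
  assumes "K \<subseteq> carrier G" "g \<in> carrier G" "x \<in> carrier G"
  shows "x \<in> g <# K #> inv g \<longleftrightarrow> inv g \<otimes> x \<otimes> g \<in> K"
proof
  assume "x \<in> g <# K #> inv g"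
  then obtain k where k: "k \<in> K" "x = g \<otimes> k \<otimes> inv g"
    unfolding conj_image by auto
  then have "inv g \<otimes> x \<otimes> g = k"
    using assms by (auto simp: m_assoc)
  then show "inv g \<otimes> x \<otimes> g \<in> K"
    using k by simp
next
  assume "inv g \<otimes> x \<otimes> g \<in> K"
  moreover have "x = g \<otimes> (inv g \<otimes> x \<otimes> g) \<otimes> inv g"
    using assms by (simp add: m_assoc)
  ultimately show "x \<in> g <# K #> inv g"
    unfolding conj_image by blast
qed

lemma conj_central:
  assumes "K \<subseteq> carrier G" "g \<in> carrier G" "\<And>k. k \<in> K \<Longrightarrow> g \<otimes> k = k \<otimes> g"
  shows "g <# K #> inv g = K"
proof -
  have "g \<otimes> k \<otimes> inv g = k" if "k \<in> K" for k
    using assms that by (auto simp: m_assoc)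
  then show ?thesis
    unfolding conj_image by simp
qed

lemma mem_normalizer_iff:
  assumes "K \<subseteq> carrier G"
  shows "g \<in> normalizer G K \<longleftrightarrow> g \<in> carrier G \<and> g <# K #> inv g = K"
  using assms by (simp add: normalizer_def stabilizer_def)

lemma normalizer_conj:
  assumes "K \<subseteq> carrier G" "h \<in> carrier G"
  shows "h <# normalizer G K #> inv h = normalizer G (h <# K #> inv h)"
proof -
  have hK: "h <# K #> inv h \<subseteq> carrier G"
    using assms by (auto simp: conj_image)
  have N: "normalizer G K \<subseteq> carrier G"
    using normalizer_imp_subgroup[OF assms(1)] subgroup.subset by blast
  have "x \<in> h <# normalizer G K #> inv h \<longleftrightarrow> x \<in> normalizer G (h <# K #> inv h)"
    if x: "x \<in> carrier G" for x
  proof -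
    define u where "u = inv h \<otimes> x \<otimes> h"
    have u: "u \<in> carrier G" "h \<otimes> u = x \<otimes> h"
      using assms x by (simp_all add: u_def m_assoc)
    have uK: "u <# K #> inv u \<subseteq> carrier G"
      using assms u by (auto simp: conj_image)
    have "x \<in> h <# normalizer G K #> inv h \<longleftrightarrow> u <# K #> inv u = K"
      using mem_conj_iff[OF N assms(2) x] mem_normalizer_iff[OF assms(1)] u by (simp add: u_def)
    also have "\<dots> \<longleftrightarrow> h <# (u <# K #> inv u) #> inv h = h <# K #> inv h"
      using subgroup_conjugation_is_inj[OF assms(2) uK assms(1)] by auto
    also have "\<dots> \<longleftrightarrow> x <# (h <# K #> inv h) #> inv x = h <# K #> inv h"
      using assms x u by (simp add: conj_conj)
    finally show ?thesis
      using mem_normalizer_iff[OF hK] x by simp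
  qed
  moreover have "h <# normalizer G K #> inv h \<subseteq> carrier G"
    using N assms by (auto simp: conj_image)
  moreover have "normalizer G (h <# K #> inv h) \<subseteq> carrier G"
    using normalizer_imp_subgroup[OF hK] subgroup.subset by blast
  ultimately show ?thesis
    by blast
qed

lemma conj_centralizer:
  assumes "e \<in> carrier G" "x \<in> carrier G"
  shows "x <# centralizer e #> inv x = centralizer (x \<otimes> e \<otimes> inv x)"
proof -
  have C: "centralizer e \<subseteq> carrier G"
    by (auto simp: centralizer_def)
  have "z \<in> x <# centralizer e #> inv x \<longleftrightarrow> z \<in> centralizer (x \<otimes> e \<otimes> inv x)"
    if z: "z \<in> carrier G" for z
  proof -
    have "z \<in> x <# centralizer e #> inv x \<longleftrightarrow> inv x \<otimes> z \<otimes> x \<otimes> e = e \<otimes> (inv x \<otimes> z \<otimes> x)"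
      using mem_conj_iff[OF C assms(2) z] z assms by (simp add: centralizer_def)
    also have "\<dots> \<longleftrightarrow> x \<otimes> (inv x \<otimes> z \<otimes> x \<otimes> e) \<otimes> inv x = x \<otimes> (e \<otimes> (inv x \<otimes> z \<otimes> x)) \<otimes> inv x"
      using conjugation_is_inj[OF assms(2)] z assms by auto
    also have "\<dots> \<longleftrightarrow> z \<otimes> (x \<otimes> e \<otimes> inv x) = (x \<otimes> e \<otimes> inv x) \<otimes> z"
      using z assms by (simp add: m_assoc)
    finally show ?thesis
      using z assms by (simp add: centralizer_def)
  qed
  moreover have "x <# centralizer e #> inv x \<subseteq> carrier G"
    using C assms by (auto simp: conj_image)
  ultimately show ?thesis
    unfolding centralizer_def by blast
qed

lemma subgroup_set_mult_normalizer:
  assumes "subgroup T G" "subgroup A G" "A \<subseteq> normalizer G T"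
  shows "subgroup (T <#> A) G"
proof -
  have N: "subgroup (normalizer G T) G"
    using normalizer_imp_subgroup assms(1) subgroup.subset by blast
  have "subgroup (T <#> A) (G\<lparr>carrier := normalizer G T\<rparr>)"
    using mult_norm_sub_in_sub[OF subgroup_in_normalizer[OF assms(1)] subgroup_incl[OF assms(2) N assms(3)] N] .
  then show ?thesis
    using incl_subgroup[OF N] by blast
qed

lemma subset_set_mult_left:
  assumes "T \<subseteq> carrier G" "subgroup A G"
  shows "T \<subseteq> T <#> A"
proof
  fix x assume "x \<in> T"
  then have "x = x \<otimes> \<one>" "\<one> \<in> A"
    using assms subgroup.one_closed by auto
  then show "x \<in> T <#> A"
    unfolding set_mult_def using \<open>x \<in> T\<close> by blast
qed

lemma subset_set_mult_right:
  assumes "subgroup T G" "A \<subseteq> carrier G"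
  shows "A \<subseteq> T <#> A"
proof
  fix x assume "x \<in> A"
  then have "x = \<one> \<otimes> x" "\<one> \<in> T"
    using assms subgroup.one_closed by auto
  then show "x \<in> T <#> A"
    unfolding set_mult_def using \<open>x \<in> A\<close> by blast
qed

lemma card_set_mult_le:
  assumes "finite T" "finite A"
  shows "card (T <#> A) \<le> card T * card A"
proof -
  have "T <#> A = (\<lambda>(t, a). t \<otimes> a) ` (T \<times> A)"
    unfolding set_mult_def by auto
  then show ?thesis
    using card_image_le[of "T \<times> A"] assms by (simp add: card_cartesian_product)
qed

lemma card_set_mult_disjoint:
  assumes "subgroup A G" "subgroup B G" "A \<inter> B \<subseteq> {\<one>}"
  shows "card (A <#> B) = card A * card B"
proof -
  interpret group_disjoint_sum G A B
    by (simp add: group_disjoint_sum_def is_group assms)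
  have "inj_on (\<lambda>(a, b). a \<otimes> b) (A \<times> B)"
    using assms(3) cancel by (auto intro!: inj_onI)
  moreover have "A <#> B = (\<lambda>(a, b). a \<otimes> b) ` (A \<times> B)"
    unfolding set_mult_def by auto
  ultimately show ?thesis
    by (simp add: card_image card_cartesian_product)
qed

lemma subgroup_subset_of_set_mult_eq:
  assumes P: "subgroup P G" and R: "subgroup R G" "R \<subseteq> P"
    and M: "M \<subseteq> carrier G" "M \<inter> P \<subseteq> {\<one>}" and MR: "P \<subseteq> M <#> R"
  shows "P \<subseteq> R"
proof
  fix d assume d: "d \<in> P"
  then obtain m r where mr: "m \<in> M" "r \<in> R" "d = m \<otimes> r"
    using MR unfolding set_mult_def by blast
  have G: "m \<in> carrier G" "r \<in> carrier G"
    using mr M(1) subgroup.mem_carrier[OF R(1)] by auto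
  then have "m = d \<otimes> inv r"
    using mr by (simp add: m_assoc)
  moreover have "d \<otimes> inv r \<in> P"
    using d mr(2) R(2) subgroup.m_closed[OF P] subgroup.m_inv_closed[OF P] by blast
  ultimately have "m = \<one>"
    using mr(1) M(2) by blast
  then show "d \<in> R"
    using mr G by simp
qed

lemma subgroup_nat_pow_closed:
  assumes "subgroup H G" "h \<in> H"
  shows "h [^] (n::nat) \<in> H"
  using subgroup_int_pow_closed[OF assms, of "int n"] by (simp add: int_pow_int)

lemma rcosets_mult_closed:
  assumes "subgroup H G" "A \<in> rcosets H" "g \<in> carrier G"
  shows "A #> g \<in> rcosets H"
proof -
  obtain a where a: "a \<in> carrier G" "A = H #> a"
    using assms(2) unfolding RCOSETS_def by blast
  then have "A #> g = H #> (a \<otimes> g)"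
    using assms subgroup.subset coset_mult_assoc by blast
  then show ?thesis
    using a assms subgroup.subset rcosetsI by (metis m_closed)
qed

lemma rcosets_action:
  assumes "subgroup K G"
  shows "group_action G (rcosets K) (\<lambda>g. \<lambda>A\<in>rcosets K. A #> inv g)"
proof -
  have Ksub: "A \<subseteq> carrier G" if "A \<in> rcosets K" for A
    using subgroup.rcosets_carrier[OF assms is_group that] .
  have bij: "(\<lambda>A\<in>rcosets K. A #> inv g) \<in> Bij (rcosets K)" if g: "g \<in> carrier G" for g
  proof -
    have "bij_betw (\<lambda>A\<in>rcosets K. A #> inv g) (rcosets K) (rcosets K)"
      by (rule bij_betwI[where g = "\<lambda>A. A #> g"])
        (use rcosets_mult_closed[OF assms] Ksub g in \<open>auto simp: coset_mult_assoc\<close>)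
    then show ?thesis
      unfolding Bij_def by auto
  qed
  have "(\<lambda>g. \<lambda>A\<in>rcosets K. A #> inv g) \<in> hom G (BijGroup (rcosets K))"
  proof (rule homI)
    fix g h assume gh: "g \<in> carrier G" "h \<in> carrier G"
    have "(\<lambda>A\<in>rcosets K. A #> inv (g \<otimes> h))
        = compose (rcosets K) (\<lambda>A\<in>rcosets K. A #> inv g) (\<lambda>A\<in>rcosets K. A #> inv h)"
    proof
      fix A
      show "(\<lambda>A\<in>rcosets K. A #> inv (g \<otimes> h)) A
          = compose (rcosets K) (\<lambda>A\<in>rcosets K. A #> inv g) (\<lambda>A\<in>rcosets K. A #> inv h) A"
        using gh Ksub rcosets_mult_closed[OF assms]
        by (cases "A \<in> rcosets K") (simp_all add: compose_def coset_mult_assoc inv_mult_group)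
    qed
    then show "(\<lambda>A\<in>rcosets K. A #> inv (g \<otimes> h))
        = (\<lambda>A\<in>rcosets K. A #> inv g) \<otimes>\<^bsub>BijGroup (rcosets K)\<^esub> (\<lambda>A\<in>rcosets K. A #> inv h)"
      using bij gh by (simp add: BijGroup_def)
  qed (use bij in \<open>simp add: BijGroup_def\<close>)
  then show ?thesis
    unfolding group_action_def group_hom_def group_hom_axioms_def
    using is_group group_BijGroup by blast
qed

lemma card_rcosets_dvd_of_set_mult_eq:
  assumes K: "subgroup K G" and R: "subgroup R G" and KR: "carrier G = K <#> R"
  shows "card (rcosets K) dvd card R"
proof -
  let ?\<phi> = "\<lambda>g. \<lambda>A\<in>rcosets K. A #> inv g"
  interpret R: group_action "G\<lparr>carrier := R\<rparr>" "rcosets K" ?\<phi>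
    using group_action.induced_action[OF rcosets_action[OF K] R] .
  have Ksub: "K \<subseteq> carrier G" and Rsub: "R \<subseteq> carrier G"
    using K R subgroup.subset by auto
  have KK: "K \<in> rcosets K"
    using rcosetsI[OF Ksub one_closed] Ksub by simp
  have "rcosets K \<subseteq> orbit (G\<lparr>carrier := R\<rparr>) ?\<phi> K"
  proof
    fix B assume "B \<in> rcosets K"
    then obtain g where g: "g \<in> carrier G" "B = K #> g"
      unfolding RCOSETS_def by blast
    then obtain k r where kr: "k \<in> K" "r \<in> R" "g = k \<otimes> r"
      using KR unfolding set_mult_def by blast
    then have "B = K #> r"
      using g Ksub Rsub coset_mult_assoc subgroup.rcos_const[OF K is_group]
      by (metis subsetD)
    also have "\<dots> = ?\<phi> (inv r) K"
      using KK kr Rsub by auto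
    finally show "B \<in> orbit (G\<lparr>carrier := R\<rparr>) ?\<phi> K"
      unfolding orbit_def using subgroup.m_inv_closed[OF R kr(2)] by auto
  qed
  then have "orbit (G\<lparr>carrier := R\<rparr>) ?\<phi> K = rcosets K"
    using R.element_image KK unfolding orbit_def by auto
  then have "card (rcosets K) * card (stabilizer (G\<lparr>carrier := R\<rparr>) ?\<phi> K) = card R"
    using R.orbit_stabilizer_theorem[OF KK] by (simp add: order_def)
  then show ?thesis
    by (metis dvd_triv_left)
qed

end

section \<open>Sylow subgroups\<close>

lemma (in group_action) fixed_point_of_prime_power_order:
  assumes "finite E" "order G = p ^ a" "Factorial_Ring.prime p" "\<not> p dvd card E"
  shows "\<exists>x\<in>E. \<forall>g\<in>carrier G. \<phi> g x = x"
proof (rule ccontr)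
  assume no_fixed: "\<not> (\<exists>x\<in>E. \<forall>g\<in>carrier G. \<phi> g x = x)"
  have "p dvd card orb" if orb: "orb \<in> orbits G E \<phi>" for orb
  proof -
    obtain x where x: "x \<in> E" "orb = orbit G \<phi> x"
      using orb unfolding orbits_def by blast
    have "card orb dvd p ^ a"
      using orbit_stabilizer_theorem[OF x(1)] x assms(2) by (metis dvd_triv_left)
    then obtain i where i: "card orb = p ^ i"
      using divides_primepow_nat[OF assms(3)] by blast
    obtain g where g: "g \<in> carrier G" "\<phi> g x \<noteq> x"
      using no_fixed x by blast
    have "orb \<subseteq> E"
      using x element_image unfolding orbit_def by blast
    moreover have "{x, \<phi> g x} \<subseteq> orb"
      using x g orbit_refl unfolding orbit_def by blast
    ultimately have "card {x, \<phi> g x} \<le> card orb"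
      using assms(1) by (meson card_mono finite_subset)
    then have "i \<noteq> 0"
      using g i by (cases "i = 0") auto
    then show ?thesis
      using i by (simp add: dvd_power)
  qed
  then have "p dvd (\<Sum>orb\<in>orbits G E \<phi>. card orb)"
    by (intro dvd_sum) auto
  moreover have "(\<Sum>orb\<in>orbits G E \<phi>. \<Sum>x\<in>orb. 1::nat) = (\<Sum>x\<in>E. 1)"
    by (rule disjoint_sum[OF assms(1)])
  ultimately show False
    using assms(4) by simp
qed

context group begin

lemma sylow_subgroup_conj:
  assumes "sylow_subgroup G p P" "g \<in> carrier G"
  shows "sylow_subgroup G p (g <# P #> inv g)"
  using assms unfolding sylow_subgroup_def by (simp add: subgroup_conj card_conj subgroup.subset)

lemma conj_subgroup_consistent:
  assumes "subgroup H G" "h \<in> H"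
  shows "h <#\<^bsub>G\<lparr>carrier := H\<rparr>\<^esub> K #>\<^bsub>G\<lparr>carrier := H\<rparr>\<^esub> inv\<^bsub>G\<lparr>carrier := H\<rparr>\<^esub> h
         = h <# K #> inv h"
  using assms by (simp add: l_coset_def r_coset_def)

lemma sylow_subgroup_restrict_iff:
  assumes "subgroup C G" "multiplicity p (card C) = multiplicity p (order G)"
  shows "sylow_subgroup (G\<lparr>carrier := C\<rparr>) p P \<longleftrightarrow> sylow_subgroup G p P \<and> P \<subseteq> C"
proof -
  have "subgroup P (G\<lparr>carrier := C\<rparr>) \<longleftrightarrow> subgroup P G \<and> P \<subseteq> C"
    using incl_subgroup[OF assms(1)] subgroup_incl[OF _ assms(1)] subgroup.subset[of P "G\<lparr>carrier := C\<rparr>"]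
    by auto
  then show ?thesis
    using assms(2) unfolding sylow_subgroup_def by (auto simp: order_def)
qed

end

locale finite_group = group +
  assumes finite_carrier: "finite (carrier G)"
begin

lemma subgroup_imp_finite_group:
  assumes "subgroup H G"
  shows "finite_group (G\<lparr>carrier := H\<rparr>)"
  using subgroup_imp_group[OF assms] finite_subset[OF subgroup.subset[OF assms] finite_carrier]
  by (simp add: finite_group_def finite_group_axioms_def)

lemma order_neq_0: "order G \<noteq> 0"
  using order_gt_0_iff_finite finite_carrier by simp

lemma p_subgroup_in_conj_of_coprime_index:
  assumes R: "subgroup R G" "card R = p ^ a" and p: "Factorial_Ring.prime p"
    and K: "subgroup K G" and index: "\<not> p dvd card (rcosets K)"
  shows "\<exists>g\<in>carrier G. R \<subseteq> g <# K #> inv g"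
proof -
  let ?\<phi> = "\<lambda>g. \<lambda>A\<in>rcosets K. A #> inv g"
  interpret R: group_action "G\<lparr>carrier := R\<rparr>" "rcosets K" ?\<phi>
    using group_action.induced_action[OF rcosets_action[OF K] R(1)] .
  have fin: "finite (rcosets K)"
    using finite_carrier rcosets_subset_PowG[OF K] by (meson finite_Pow_iff finite_subset)
  have ord: "order (G\<lparr>carrier := R\<rparr>) = p ^ a"
    using R(2) by (simp add: order_def)
  obtain A where A: "A \<in> rcosets K" and fixed: "\<And>r. r \<in> R \<Longrightarrow> A #> inv r = A"
    using R.fixed_point_of_prime_power_order[OF fin ord p index] by auto
  obtain g where g: "g \<in> carrier G" "A = K #> g"
    using A unfolding RCOSETS_def by blast
  have Rsub: "R \<subseteq> carrier G" and Ksub: "K \<subseteq> carrier G"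
    using R(1) K subgroup.subset by auto
  have "R \<subseteq> inv g <# K #> inv (inv g)"
  proof
    fix r assume r: "r \<in> R"
    then have rG: "r \<in> carrier G"
      using Rsub by blast
    have "K #> (g \<otimes> inv r) = K #> g"
      using fixed[OF r] g rG Ksub by (simp add: coset_mult_assoc)
    then have "g \<otimes> inv r \<in> K #> g"
      using repr_independenceD[OF K] g rG by (metis inv_closed m_closed)
    then have "g \<otimes> inv r \<otimes> inv g \<in> K"
      using subgroup.rcos_module_imp[OF K is_group g(1)] by blast
    then have "inv (g \<otimes> inv r \<otimes> inv g) \<in> K"
      using subgroup.m_inv_closed[OF K] by blast
    then have "g \<otimes> r \<otimes> inv g \<in> K"
      using g rG by (simp add: inv_mult_group m_assoc)
    then show "r \<in> inv g <# K #> inv (inv g)"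
      using mem_conj_iff[OF Ksub inv_closed[OF g(1)] rG] g by simp
  qed
  then show ?thesis
    using g by (metis inv_closed inv_inv)
qed

lemma sylow_subgroup_exists:
  assumes "Factorial_Ring.prime p"
  shows "\<exists>P. sylow_subgroup G p P"
proof -
  obtain m where "order G = p ^ multiplicity p (order G) * m"
    using multiplicity_dvd by blast
  then show ?thesis
    using sylow_thm[OF assms is_group _ finite_carrier] assms unfolding sylow_subgroup_def by blast
qed

lemma sylow_subgroup_index_not_dvd:
  assumes "sylow_subgroup G p P"
  shows "\<not> p dvd card (rcosets P)"
proof
  assume "p dvd card (rcosets P)"
  then have "p * card P dvd card (rcosets P) * card P"
    by (rule mult_dvd_mono) simp
  then have "p * card P dvd order G"
    using lagrange[of P] assms unfolding sylow_subgroup_def by (simp only:)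
  then have "p ^ Suc (multiplicity p (order G)) dvd order G"
    using assms unfolding sylow_subgroup_def by simp
  moreover have "\<not> is_unit p"
    using assms not_prime_unit unfolding sylow_subgroup_def by blast
  ultimately show False
    using power_dvd_iff_le_multiplicity[OF order_neq_0] by (metis Suc_n_not_le_n)
qed

lemma p_subgroup_in_conj_sylow:
  assumes "sylow_subgroup G p P" "subgroup R G" "card R = p ^ a"
  shows "\<exists>g\<in>carrier G. R \<subseteq> g <# P #> inv g"
  using p_subgroup_in_conj_of_coprime_index[OF assms(2,3) _ _ sylow_subgroup_index_not_dvd[OF assms(1)]]
    assms(1) unfolding sylow_subgroup_def by blast

lemma sylow_subgroups_conj:
  assumes "sylow_subgroup G p P" "sylow_subgroup G p Q"
  shows "\<exists>g\<in>carrier G. Q = g <# P #> inv g"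
proof -
  obtain g where g: "g \<in> carrier G" "Q \<subseteq> g <# P #> inv g"
    using p_subgroup_in_conj_sylow[OF assms(1)] assms(2) unfolding sylow_subgroup_def by blast
  have "sylow_subgroup G p (g <# P #> inv g)"
    using sylow_subgroup_conj[OF assms(1) g(1)] .
  then have "finite (g <# P #> inv g)" "card (g <# P #> inv g) = card Q"
    using assms(2) finite_carrier finite_subset subgroup.subset unfolding sylow_subgroup_def by auto
  then show ?thesis
    using g card_subset_eq by metis
qed

lemma sylow_subgroup_containing:
  assumes "Factorial_Ring.prime p" "y \<in> carrier G" "ord y = p ^ a"
  shows "\<exists>P. sylow_subgroup G p P \<and> y \<in> P"
proof -
  obtain S where S: "sylow_subgroup G p S"
    using sylow_subgroup_exists[OF assms(1)] by blast
  have "subgroup (generate G {y}) G" "card (generate G {y}) = p ^ a"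
    using generate_is_subgroup generate_pow_card assms(2,3) by auto
  then obtain g where "g \<in> carrier G" "generate G {y} \<subseteq> g <# S #> inv g"
    using p_subgroup_in_conj_sylow[OF S] by blast
  then show ?thesis
    using sylow_subgroup_conj[OF S] generate.incl[of y "{y}" G] by blast
qed

lemma multiplicity_card_sylow_supset:
  assumes "sylow_subgroup G p P" "subgroup C G" "P \<subseteq> C"
  shows "multiplicity p (card C) = multiplicity p (order G)"
proof -
  have p: "\<not> is_unit p"
    using assms(1) not_prime_unit unfolding sylow_subgroup_def by blast
  have "card C dvd order G"
    using lagrange[OF assms(2)] by (metis dvd_triv_right)
  then have "multiplicity p (card C) \<le> multiplicity p (order G)"
    using dvd_imp_multiplicity_le order_neq_0 by blast
  moreover have "p ^ multiplicity p (order G) dvd card C"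
    using card_subgroup_dvd[OF _ assms(2,3)] assms(1) unfolding sylow_subgroup_def by metis
  then have "multiplicity p (order G) \<le> multiplicity p (card C)"
    using power_dvd_iff_le_multiplicity[OF _ p] \<open>card C dvd order G\<close> order_neq_0
    by (metis dvd_0_left)
  ultimately show ?thesis
    by simp
qed

lemma sylow_subgroup_unique_in_comm:
  assumes C: "subgroup C G" "comm_group (G\<lparr>carrier := C\<rparr>)"
    and P: "sylow_subgroup G p P" "P \<subseteq> C" and Q: "sylow_subgroup G p Q" "Q \<subseteq> C"
  shows "P = Q"
proof -
  interpret C: finite_group "G\<lparr>carrier := C\<rparr>"
    using subgroup_imp_finite_group[OF C(1)] .
  have "sylow_subgroup (G\<lparr>carrier := C\<rparr>) p P" "sylow_subgroup (G\<lparr>carrier := C\<rparr>) p Q"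
    using sylow_subgroup_restrict_iff[OF C(1) multiplicity_card_sylow_supset[OF P(1) C(1) P(2)]] P Q
    by auto
  then obtain c where c: "c \<in> C" "Q = c <# P #> inv c"
    using C.sylow_subgroups_conj conj_subgroup_consistent[OF C(1)] by fastforce
  have "c <# P #> inv c = P"
    using C c P(2) subgroup.subset comm_group_subgroup_iff by (intro conj_central) blast+
  then show ?thesis
    using c by simp
qed

lemma sylow_subgroup_conj_in_normal:
  assumes M: "M \<lhd> G" and T: "sylow_subgroup (G\<lparr>carrier := M\<rparr>) t T" and g: "g \<in> carrier G"
  shows "sylow_subgroup (G\<lparr>carrier := M\<rparr>) t (g <# T #> inv g)"
proof -
  have MG: "subgroup M G"
    using normal_imp_subgroup[OF M] .
  have TM: "subgroup T (G\<lparr>carrier := M\<rparr>)"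
    using T unfolding sylow_subgroup_def by blast
  then have "T \<subseteq> M"
    using subgroup.subset by fastforce
  then have "g <# T #> inv g \<subseteq> M"
    using g normal.inv_op_closed2[OF M] by (auto simp: conj_image)
  then have "subgroup (g <# T #> inv g) (G\<lparr>carrier := M\<rparr>)"
    using subgroup_incl[OF subgroup_conj[OF incl_subgroup[OF MG TM] g] MG] by blast
  then show ?thesis
    using T card_conj[OF _ g] \<open>T \<subseteq> M\<close> subgroup.subset[OF MG] unfolding sylow_subgroup_def
    by (metis order_trans)
qed

lemma frattini_argument:
  assumes M: "M \<lhd> G" and T: "sylow_subgroup (G\<lparr>carrier := M\<rparr>) t T"
  shows "carrier G = normalizer G T <#> M"
proof
  have MG: "subgroup M G"
    using normal_imp_subgroup[OF M] .
  interpret M: finite_group "G\<lparr>carrier := M\<rparr>"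
    using subgroup_imp_finite_group[OF MG] .
  have TG: "T \<subseteq> carrier G"
    using T subgroup.subset[of T "G\<lparr>carrier := M\<rparr>"] subgroup.subset[OF MG] unfolding sylow_subgroup_def
    by auto
  show "carrier G \<subseteq> normalizer G T <#> M"
  proof
    fix g assume g: "g \<in> carrier G"
    obtain m where m: "m \<in> M" "g <# T #> inv g = m <# T #> inv m"
      using M.sylow_subgroups_conj[OF T sylow_subgroup_conj_in_normal[OF M T g]]
        conj_subgroup_consistent[OF MG] by fastforce
    have mG: "m \<in> carrier G"
      using subgroup.mem_carrier[OF MG m(1)] .
    define n where "n = inv m \<otimes> g"
    have nG: "n \<in> carrier G"
      using mG g by (simp add: n_def)
    have "n <# T #> inv n = inv m <# (g <# T #> inv g) #> inv (inv m)"
      using conj_conj[OF TG inv_closed[OF mG] g] mG by (simp add: n_def)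
    also have "\<dots> = T"
      using subgroup_conjugation_is_surj0[OF inv_closed[OF mG] TG] mG m(2) by simp
    finally have "n \<in> normalizer G T"
      using mem_normalizer_iff[OF TG] nG by simp
    moreover have "inv n \<otimes> m \<otimes> n \<in> M"
      using normal.inv_op_closed1[OF M nG m(1)] .
    moreover have "g = n \<otimes> (inv n \<otimes> m \<otimes> n)"
      using mG g nG by (simp add: n_def m_assoc)
    ultimately show "g \<in> normalizer G T <#> M"
      unfolding set_mult_def by blast
  qed
  show "normalizer G T <#> M \<subseteq> carrier G"
    using normalizer_imp_subgroup[OF TG] MG subgroup.subset by (auto simp: set_mult_def)
qed

end

section \<open>The transfer and Burnside's normal complement theorem\<close>

lemma Diff_closed_if_inj_on:
  assumes "inj_on f S" "\<And>x. x \<in> S \<Longrightarrow> f x \<in> S" "T \<subseteq> S" "T \<subseteq> f ` T" "x \<in> S - T"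
  shows "f x \<in> S - T"
proof -
  have "f x \<notin> T"
  proof
    assume "f x \<in> T"
    then obtain y where "y \<in> T" "f x = f y"
      using assms(4) by blast
    then show False
      using assms(1,3,5) inj_onD by fastforce
  qed
  then show ?thesis
    using assms(2,5) by blast
qed

definition coset_rep :: "'a set \<Rightarrow> 'a" where
  "coset_rep A = (SOME g. g \<in> A)"

context group begin

lemma bij_betw_rcosets_mult:
  assumes "subgroup H G" "g \<in> carrier G"
  shows "bij_betw (\<lambda>A. A #> g) (rcosets H) (rcosets H)"
proof -
  have "bij_betw (\<lambda>A\<in>rcosets H. A #> inv (inv g)) (rcosets H) (rcosets H)"
    using group_action.bij_prop0[OF rcosets_action[OF assms(1)], of "inv g"] assms(2)
    by (simp add: Bij_def)
  then show ?thesis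
    using assms(2) by (simp add: bij_betw_def inj_on_def)
qed

text \<open>
  With the transversal given by \<^const>\<open>coset_rep\<close> (an arbitrary element of each coset), one has
  rep(A) g = transfer_factor A g * rep(A g); the transfer of g into H is the product of these
  factors over all right cosets A of H.
\<close>

definition transfer_factor :: "'a set \<Rightarrow> 'a \<Rightarrow> 'a" where
  "transfer_factor A g = coset_rep A \<otimes> g \<otimes> inv (coset_rep (A #> g))"

definition transfer :: "'a set \<Rightarrow> 'a \<Rightarrow> 'a" where
  "transfer H g = finprod (G\<lparr>carrier := H\<rparr>) (\<lambda>A. transfer_factor A g) (rcosets H)"

lemma coset_rep_mem:
  assumes "subgroup H G" "A \<in> rcosets H"
  shows "coset_rep A \<in> A"
  using subgroup.rcosets_non_empty[OF assms] unfolding coset_rep_def by (meson ex_in_conv someI_ex)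

lemma coset_rep_carrier:
  assumes "subgroup H G" "A \<in> rcosets H"
  shows "coset_rep A \<in> carrier G"
  using coset_rep_mem[OF assms] subgroup.rcosets_carrier[OF assms(1) is_group assms(2)] by blast

lemma rcoset_mult_inv_mem:
  assumes "subgroup H G" "B \<in> rcosets H" "x \<in> B" "y \<in> B"
  shows "x \<otimes> inv y \<in> H"
proof -
  obtain b where b: "b \<in> carrier G" "B = H #> b"
    using assms(2) unfolding RCOSETS_def by blast
  then obtain h k where hk: "h \<in> H" "k \<in> H" "x = h \<otimes> b" "y = k \<otimes> b"
    using assms(3,4) unfolding r_coset_def by blast
  then have "x \<otimes> inv y = h \<otimes> inv k"
    using b subgroup.mem_carrier[OF assms(1)] by (simp add: inv_mult_group m_assoc)
  then show ?thesis
    using hk assms(1) subgroup.m_closed subgroup.m_inv_closed by metis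
qed

lemma transfer_factor_mem:
  assumes "subgroup H G" "A \<in> rcosets H" "g \<in> carrier G"
  shows "transfer_factor A g \<in> H"
proof -
  have "coset_rep A \<otimes> g \<in> A #> g"
    using coset_rep_mem[OF assms(1,2)] unfolding r_coset_def by blast
  moreover have "coset_rep (A #> g) \<in> A #> g"
    using coset_rep_mem[OF assms(1) rcosets_mult_closed[OF assms]] .
  ultimately show ?thesis
    unfolding transfer_factor_def using rcoset_mult_inv_mem[OF assms(1) rcosets_mult_closed[OF assms]] by blast
qed

lemma transfer_factor_mult:
  assumes "subgroup H G" "A \<in> rcosets H" "g \<in> carrier G" "h \<in> carrier G"
  shows "transfer_factor A (g \<otimes> h) = transfer_factor A g \<otimes> transfer_factor (A #> g) h"
proof -
  have "A #> (g \<otimes> h) = A #> g #> h"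
    using subgroup.rcosets_carrier[OF assms(1) is_group assms(2)] assms by (simp add: coset_mult_assoc)
  moreover have "coset_rep A \<in> carrier G" "coset_rep (A #> g) \<in> carrier G" "coset_rep (A #> g #> h) \<in> carrier G"
    using coset_rep_carrier rcosets_mult_closed assms by metis+
  ultimately show ?thesis
    unfolding transfer_factor_def using assms by (simp add: m_assoc)
qed

lemma pow_orbit_mem:
  assumes "A \<subseteq> carrier G" "d \<in> carrier G" "A \<in> S" "\<And>B. B \<in> S \<Longrightarrow> B #> d \<in> S"
  shows "A #> d [^] (i::nat) \<in> S"
proof (induction i)
  case 0
  then show ?case
    using assms(1,3) by simp
next
  case (Suc i)
  have "A #> d [^] i #> d = A #> d [^] Suc i"
    using assms(1,2) by (simp add: coset_mult_assoc)
  then show ?case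
    using assms(4)[OF Suc.IH] by simp
qed

lemma pow_orbit_periodic:
  assumes "A \<subseteq> carrier G" "d \<in> carrier G" "A #> d [^] (k::nat) = A"
  shows "A #> d [^] (q * k + i) = A #> d [^] (i::nat)"
proof (induction q)
  case (Suc q)
  have "A #> d [^] (Suc q * k + i) = A #> d [^] k #> d [^] (q * k + i)"
    using assms(1,2) by (simp add: coset_mult_assoc nat_pow_mult add.assoc)
  then show ?case
    using assms(3) Suc.IH by simp
qed simp

lemma pow_orbit_subset_image:
  assumes "finite (carrier G)" "A \<subseteq> carrier G" "d \<in> carrier G"
  shows "range (\<lambda>i::nat. A #> d [^] i) \<subseteq> (\<lambda>B. B #> d) ` range (\<lambda>i::nat. A #> d [^] i)"
proof -
  have "A #> d [^] i = A #> d [^] (i + ord d - 1) #> d" for i :: nat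
  proof -
    have "A #> d [^] i = A #> d [^] (1 * ord d + i)"
      using pow_orbit_periodic[OF assms(2,3), of "ord d" 1 i] assms(2,3) by simp
    also have "\<dots> = A #> d [^] Suc (i + ord d - 1)"
      using ord_ge_1[OF assms(1,3)] by (simp add: add.commute)
    also have "\<dots> = A #> d [^] (i + ord d - 1) #> d"
      using assms(2,3) by (simp add: coset_mult_assoc)
    finally show ?thesis .
  qed
  then show ?thesis
    by blast
qed

lemma pow_orbit_cycle:
  assumes "finite (carrier G)" "A \<subseteq> carrier G" "d \<in> carrier G"
  obtains k :: nat where "0 < k" "A #> d [^] k = A" "inj_on (\<lambda>i. A #> d [^] i) {..<k}"
    "range (\<lambda>i::nat. A #> d [^] i) = (\<lambda>i. A #> d [^] i) ` {..<k}"
proof -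
  define k where "k = (LEAST k::nat. 0 < k \<and> A #> d [^] k = A)"
  have "0 < ord d \<and> A #> d [^] ord d = A"
    using ord_ge_1[OF assms(1,3)] assms(2,3) by simp
  then have "0 < k \<and> A #> d [^] k = A"
    unfolding k_def by (rule LeastI)
  then have k: "0 < k" "A #> d [^] k = A"
    by auto
  have inj: "inj_on (\<lambda>i. A #> d [^] i) {..<k}"
  proof (rule inj_onI)
    have cancel: "i = j" if ij: "i \<le> j" "j < k" "A #> d [^] i = A #> d [^] j" for i j :: nat
    proof (rule ccontr)
      assume "i \<noteq> j"
      have "A #> d [^] (j - i) #> d [^] i #> inv (d [^] i) = A #> d [^] i #> inv (d [^] i)"
        using ij assms(2,3) by (simp add: coset_mult_assoc nat_pow_mult)
      then have "A #> d [^] (j - i) = A"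
        using assms(2,3) by (simp add: coset_mult_assoc m_assoc)
      moreover have "0 < j - i" "j - i < k"
        using ij \<open>i \<noteq> j\<close> by auto
      ultimately show False
        using not_less_Least[of "j - i"] unfolding k_def by blast
    qed
    fix i j assume "i \<in> {..<k}" "j \<in> {..<k}" "A #> d [^] i = A #> d [^] j"
    then show "i = j"
      using cancel[of i j] cancel[of j i] by (cases "i \<le> j") auto
  qed
  have "A #> d [^] i = A #> d [^] (i mod k)" for i :: nat
    using pow_orbit_periodic[OF assms(2,3) k(2), of "i div k" "i mod k"] by simp
  then have "range (\<lambda>i::nat. A #> d [^] i) = (\<lambda>i. A #> d [^] i) ` {..<k}"
    using k(1) by (auto intro!: image_eqI[where x = "_ mod k"])
  then show ?thesis
    using that k inj by blast
qed

end

context group begin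

lemma pow_inverse_exists_if_coprime:
  assumes "subgroup P G" "finite P" "coprime (n::nat) (card P)"
  shows "\<exists>u::nat. \<forall>c\<in>P. (c [^] n) [^] u = c"
proof (cases "n = 0")
  case True
  then have "card P = 1"
    using assms(3) by simp
  then have "P = {\<one>}"
    using subgroup.one_closed[OF assms(1)] by (metis card_1_singletonE singletonD)
  then show ?thesis
    by auto
next
  case False
  obtain u v where uv: "n * u = card P * v + 1"
    using bezout_nat[OF False, of "card P"] assms(3) by auto
  interpret P: group "G\<lparr>carrier := P\<rparr>"
    using subgroup_imp_group[OF assms(1)] .
  have "(c [^] n) [^] u = c" if c: "c \<in> P" for c
  proof -
    have cG: "c \<in> carrier G"
      using c subgroup.mem_carrier[OF assms(1)] by blast
    have "c [^] card P = \<one>"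
      using P.pow_order_eq_1[of c] c by (simp add: order_def nat_pow_def)
    then show ?thesis
      using cG uv by (simp add: nat_pow_pow nat_pow_mult flip: nat_pow_pow[of c "card P" v])
  qed
  then show ?thesis
    by blast
qed

context
  fixes P V and n :: nat
  assumes V: "group_hom G (G\<lparr>carrier := P\<rparr>) V" and P: "subgroup P G" "finite P"
    and n: "coprime n (card P)" and V_on_P: "\<And>d. d \<in> P \<Longrightarrow> V d = d [^] n"
begin

lemma kernel_set_mult_eq_carrier: "kernel G (G\<lparr>carrier := P\<rparr>) V <#> P = carrier G"
proof
  interpret V: group_hom G "G\<lparr>carrier := P\<rparr>" V
    by (rule V)
  obtain u :: nat where u: "\<And>c. c \<in> P \<Longrightarrow> (c [^] n) [^] u = c"
    using pow_inverse_exists_if_coprime[OF P n] by blast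
  show "carrier G \<subseteq> kernel G (G\<lparr>carrier := P\<rparr>) V <#> P"
  proof
    fix g assume g: "g \<in> carrier G"
    have Vg: "V g \<in> P" "V g \<in> carrier G"
      using V.hom_closed[OF g] subgroup.mem_carrier[OF P(1)] by auto
    define d where "d = V g [^] u"
    have d: "d \<in> P" "d \<in> carrier G"
      using subgroup_nat_pow_closed[OF P(1) Vg(1)] subgroup.mem_carrier[OF P(1)] unfolding d_def by auto
    have "V d = V g"
      using V_on_P[OF d(1)] u[OF Vg(1)] Vg(2) unfolding d_def by (simp add: nat_pow_pow mult.commute)
    then have "V (g \<otimes> inv d) = \<one>"
      using V.hom_mult[OF g inv_closed[OF d(2)]] V.hom_inv[OF d(2)] P(1) d(1) Vg by simp
    then have "g \<otimes> inv d \<in> kernel G (G\<lparr>carrier := P\<rparr>) V"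
      using g d unfolding kernel_def by simp
    moreover have "g = (g \<otimes> inv d) \<otimes> d"
      using g d by (simp add: m_assoc)
    ultimately show "g \<in> kernel G (G\<lparr>carrier := P\<rparr>) V <#> P"
      using d(1) unfolding set_mult_def by blast
  qed
  show "kernel G (G\<lparr>carrier := P\<rparr>) V <#> P \<subseteq> carrier G"
    using subgroup.subset[OF P(1)] unfolding kernel_def set_mult_def by auto
qed

lemma kernel_inter_eq_one: "kernel G (G\<lparr>carrier := P\<rparr>) V \<inter> P = {\<one>}"
proof -
  obtain u :: nat where u: "\<And>c. c \<in> P \<Longrightarrow> (c [^] n) [^] u = c"
    using pow_inverse_exists_if_coprime[OF P n] by blast
  have "d = \<one>" if d: "d \<in> kernel G (G\<lparr>carrier := P\<rparr>) V \<inter> P" for d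
  proof -
    have "d [^] n = \<one>"
      using V_on_P[of d] d unfolding kernel_def by auto
    then show ?thesis
      using u[of d] d by simp
  qed
  then show ?thesis
    using subgroup.one_closed[OF P(1)] group_hom.hom_one[OF V] unfolding kernel_def by auto
qed

end

end

context finite_group begin

context
  fixes H assumes H: "subgroup H G" and H_comm: "comm_group (G\<lparr>carrier := H\<rparr>)"
begin

lemma transfer_mem:
  assumes "g \<in> carrier G"
  shows "transfer H g \<in> H"
proof -
  interpret H: comm_group "G\<lparr>carrier := H\<rparr>"
    by (rule H_comm)
  show ?thesis
    unfolding transfer_def using transfer_factor_mem[OF H _ assms] by (auto intro: H.finprod_closed[simplified])
qed

lemma transfer_mult:
  assumes g: "g \<in> carrier G" and h: "h \<in> carrier G"
  shows "transfer H (g \<otimes> h) = transfer H g \<otimes> transfer H h"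
proof -
  interpret H: comm_group "G\<lparr>carrier := H\<rparr>"
    by (rule H_comm)
  let ?P = "finprod (G\<lparr>carrier := H\<rparr>)"
  have "transfer H (g \<otimes> h) = ?P (\<lambda>A. transfer_factor A g \<otimes> transfer_factor (A #> g) h) (rcosets H)"
    unfolding transfer_def
    using transfer_factor_mult[OF H _ g h] transfer_factor_mem[OF H] rcosets_mult_closed[OF H] g h
    by (intro H.finprod_cong') (auto intro: subgroup.m_closed[OF H])
  also have "\<dots> = transfer H g \<otimes> ?P (\<lambda>A. transfer_factor (A #> g) h) (rcosets H)"
    unfolding transfer_def
    using H.finprod_multf[of "\<lambda>A. transfer_factor A g" "rcosets H" "\<lambda>A. transfer_factor (A #> g) h"]
      transfer_factor_mem[OF H] rcosets_mult_closed[OF H] g h by auto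
  also have "?P (\<lambda>A. transfer_factor (A #> g) h) (rcosets H)
      = ?P (\<lambda>A. transfer_factor A h) ((\<lambda>A. A #> g) ` (rcosets H))"
    using H.finprod_reindex[of "\<lambda>A. transfer_factor A h" "\<lambda>A. A #> g" "rcosets H"]
      bij_betw_rcosets_mult[OF H g] transfer_factor_mem[OF H _ h] by (auto simp: bij_betw_def)
  also have "\<dots> = transfer H h"
    using bij_betw_rcosets_mult[OF H g] by (simp add: bij_betw_def transfer_def)
  finally show ?thesis .
qed

lemma transfer_hom: "group_hom G (G\<lparr>carrier := H\<rparr>) (transfer H)"
  using transfer_mem transfer_mult subgroup_imp_group[OF H]
  by (auto intro!: homI simp: group_hom_def group_hom_axioms_def is_group)

lemma finprod_transfer_factor_telescope:
  assumes A: "A \<in> rcosets H" and d: "d \<in> carrier G"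
  shows "finprod (G\<lparr>carrier := H\<rparr>) (\<lambda>i. transfer_factor (A #> d [^] i) d) {..<j::nat}
      = coset_rep A \<otimes> d [^] j \<otimes> inv (coset_rep (A #> d [^] j))"
proof -
  interpret H: comm_group "G\<lparr>carrier := H\<rparr>"
    by (rule H_comm)
  have Ai: "A #> d [^] i \<in> rcosets H" for i :: nat
    using rcosets_mult_closed[OF H A] d by simp
  show ?thesis
  proof (induction j)
    case 0
    then show ?case
      using coset_rep_carrier[OF H A] subgroup.rcosets_carrier[OF H is_group A] by simp
  next
    case (Suc j)
    define r where "r = coset_rep (A #> d [^] j)"
    define r' where "r' = coset_rep (A #> d [^] Suc j)"
    have "A #> d [^] j #> d = A #> d [^] Suc j"
      using subgroup.rcosets_carrier[OF H is_group A] d by (simp add: coset_mult_assoc)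
    then have factor: "transfer_factor (A #> d [^] j) d = r \<otimes> d \<otimes> inv r'"
      unfolding transfer_factor_def r_def r'_def by simp
    have rG: "r \<in> carrier G" "r' \<in> carrier G"
      unfolding r_def r'_def using coset_rep_carrier[OF H Ai] by blast+
    have "finprod (G\<lparr>carrier := H\<rparr>) (\<lambda>i. transfer_factor (A #> d [^] i) d) {..<Suc j}
        = finprod (G\<lparr>carrier := H\<rparr>) (\<lambda>i. transfer_factor (A #> d [^] i) d) {..<j}
          \<otimes> transfer_factor (A #> d [^] j) d"
      unfolding lessThan_Suc using transfer_factor_mem[OF H Ai d] H.finprod_closed[of _ "{..<j}"]
      by (simp add: H.m_comm[simplified])
    also have "\<dots> = coset_rep A \<otimes> d [^] Suc j \<otimes> inv r'"
      using Suc.IH factor coset_rep_carrier[OF H A] rG d unfolding r_def[symmetric]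
      by (simp add: m_assoc nat_pow_Suc2)
    finally show ?case
      unfolding r'_def .
  qed
qed

text \<open>
  When conjugation never moves an element of H to a different element of H, the transfer of d is
  easy to compute: the right cosets split into cycles under multiplication by d, and a cycle of
  length k contributes a conjugate of d^k lying in H, that is, d^k itself.
\<close>

context
  assumes fusion: "\<And>x e. x \<in> carrier G \<Longrightarrow> e \<in> H \<Longrightarrow> x \<otimes> e \<otimes> inv x \<in> H \<Longrightarrow> x \<otimes> e \<otimes> inv x = e"
begin

lemma finprod_transfer_factor_cycle:
  assumes A: "A \<in> rcosets H" and d: "d \<in> H"
    and k: "A #> d [^] (k::nat) = A" "inj_on (\<lambda>i. A #> d [^] i) {..<k}"
  shows "finprod (G\<lparr>carrier := H\<rparr>) (\<lambda>B. transfer_factor B d) ((\<lambda>i. A #> d [^] i) ` {..<k}) = d [^] k"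
proof -
  interpret H: comm_group "G\<lparr>carrier := H\<rparr>"
    by (rule H_comm)
  have dG: "d \<in> carrier G"
    using subgroup.mem_carrier[OF H d] .
  have tf: "(\<lambda>B. transfer_factor B d) \<in> (\<lambda>i. A #> d [^] i) ` {..<k} \<rightarrow> carrier (G\<lparr>carrier := H\<rparr>)"
    using transfer_factor_mem[OF H rcosets_mult_closed[OF H A nat_pow_closed[OF dG]] dG] by auto
  have "finprod (G\<lparr>carrier := H\<rparr>) (\<lambda>B. transfer_factor B d) ((\<lambda>i. A #> d [^] i) ` {..<k})
      = coset_rep A \<otimes> d [^] k \<otimes> inv (coset_rep A)"
    using H.finprod_reindex[OF tf k(2)] finprod_transfer_factor_telescope[OF A dG, of k] k(1) by simp
  moreover have "finprod (G\<lparr>carrier := H\<rparr>) (\<lambda>B. transfer_factor B d) ((\<lambda>i. A #> d [^] i) ` {..<k}) \<in> H"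
    using H.finprod_closed[OF tf] by simp
  moreover have "d [^] k \<in> H"
    using subgroup_nat_pow_closed[OF H d] .
  ultimately show ?thesis
    using fusion coset_rep_carrier[OF H A] by metis
qed

lemma finprod_transfer_factor_orbit:
  assumes A: "A \<in> rcosets H" and d: "d \<in> H"
  shows "finprod (G\<lparr>carrier := H\<rparr>) (\<lambda>B. transfer_factor B d) (range (\<lambda>i::nat. A #> d [^] i))
    = d [^] card (range (\<lambda>i::nat. A #> d [^] i))"
proof -
  obtain k :: nat where k: "0 < k" "A #> d [^] k = A" "inj_on (\<lambda>i. A #> d [^] i) {..<k}"
    "range (\<lambda>i::nat. A #> d [^] i) = (\<lambda>i. A #> d [^] i) ` {..<k}"
    by (rule pow_orbit_cycle[OF finite_carrier subgroup.rcosets_carrier[OF H is_group A]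
          subgroup.mem_carrier[OF H d]])
  then show ?thesis
    using finprod_transfer_factor_cycle[OF A d k(2,3)] card_image[OF k(3)] by simp
qed

lemma finprod_transfer_factor_invariant:
  assumes d: "d \<in> H" and S: "S \<subseteq> rcosets H" "\<And>B. B \<in> S \<Longrightarrow> B #> d \<in> S"
  shows "finprod (G\<lparr>carrier := H\<rparr>) (\<lambda>B. transfer_factor B d) S = d [^] card S"
  using S
proof (induction "card S" arbitrary: S rule: less_induct)
  case less
  interpret H: comm_group "G\<lparr>carrier := H\<rparr>"
    by (rule H_comm)
  let ?P = "finprod (G\<lparr>carrier := H\<rparr>) (\<lambda>B. transfer_factor B d)"
  have dG: "d \<in> carrier G"
    using subgroup.mem_carrier[OF H d] .
  have finS: "finite S"
    using less.prems(1) finite_carrier rcosets_subset_PowG[OF H] by (meson finite_Pow_iff finite_subset)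
  show ?case
  proof (cases "S = {}")
    case False
    then obtain A where A: "A \<in> S"
      by blast
    then have AH: "A \<in> rcosets H" and AG: "A \<subseteq> carrier G"
      using less.prems subgroup.rcosets_carrier[OF H is_group] by auto
    let ?O = "range (\<lambda>i::nat. A #> d [^] i)"
    have OS: "?O \<subseteq> S"
      using pow_orbit_mem[OF AG dG A less.prems(2)] by blast
    have inj: "inj_on (\<lambda>B. B #> d) S"
      using bij_betw_imp_inj_on[OF bij_betw_rcosets_mult[OF H dG]] less.prems(1) by (rule inj_on_subset)
    have orbit_back: "?O \<subseteq> (\<lambda>B. B #> d) ` ?O"
      by (rule pow_orbit_subset_image[OF finite_carrier AG dG])
    have rest: "B #> d \<in> S - ?O" if "B \<in> S - ?O" for B
      using Diff_closed_if_inj_on[OF inj less.prems(2) OS orbit_back that] .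
    have "A \<in> ?O"
      using rangeI[of "\<lambda>i::nat. A #> d [^] i" 0] AG by simp
    then have "S - ?O \<subset> S"
      using A by blast
    then have "card (S - ?O) < card S"
      using psubset_card_mono[OF finS] by blast
    then have IH: "?P (S - ?O) = d [^] card (S - ?O)"
      using less.hyps less.prems(1) rest by blast
    have "(\<lambda>B. transfer_factor B d) \<in> S \<rightarrow> carrier (G\<lparr>carrier := H\<rparr>)"
      using less.prems(1) transfer_factor_mem[OF H _ dG] by auto
    then have "?P (?O \<union> (S - ?O)) = ?P ?O \<otimes>\<^bsub>G\<lparr>carrier := H\<rparr>\<^esub> ?P (S - ?O)"
      by (intro H.finprod_Un_disjoint) (use finS OS finite_subset[OF OS finS] in auto)
    moreover have "?O \<union> (S - ?O) = S"
      using OS by blast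
    ultimately have "?P S = ?P ?O \<otimes> ?P (S - ?O)"
      by simp
    also have "\<dots> = d [^] (card ?O + card (S - ?O))"
      using finprod_transfer_factor_orbit[OF AH d] IH dG by (simp add: nat_pow_mult)
    also have "card ?O + card (S - ?O) = card S"
      using card_Diff_subset[OF finite_subset[OF OS finS] OS] card_mono[OF finS OS] by simp
    finally show ?thesis .
  qed simp
qed

lemma transfer_eval:
  assumes "d \<in> H"
  shows "transfer H d = d [^] card (rcosets H)"
proof -
  have "B #> d \<in> rcosets H" if "B \<in> rcosets H" for B
    using rcosets_mult_closed[OF H that subgroup.mem_carrier[OF H assms]] .
  then show ?thesis
    unfolding transfer_def by (rule finprod_transfer_factor_invariant[OF assms subset_refl])
qed

end

end

theorem burnside_normal_complement:
  assumes P: "sylow_subgroup G p P" "comm_group (G\<lparr>carrier := P\<rparr>)"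
    and fusion: "\<And>x e. x \<in> carrier G \<Longrightarrow> e \<in> P \<Longrightarrow> x \<otimes> e \<otimes> inv x \<in> P \<Longrightarrow> x \<otimes> e \<otimes> inv x = e"
  shows "\<exists>M. M \<lhd> G \<and> M <#> P = carrier G \<and> M \<inter> P = {\<one>}"
proof -
  have Psub: "subgroup P G"
    using P(1) unfolding sylow_subgroup_def by blast
  have fin: "finite P"
    using finite_subset[OF subgroup.subset[OF Psub] finite_carrier] .
  have cop: "coprime (card (rcosets P)) (card P)"
    using sylow_subgroup_index_not_dvd[OF P(1)] P(1) unfolding sylow_subgroup_def
    by (simp add: prime_imp_coprime coprime_commute)
  note hom = transfer_hom[OF Psub P(2)]
  show ?thesis
    using kernel_set_mult_eq_carrier[OF hom Psub fin cop transfer_eval[OF Psub P(2) fusion]]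
      kernel_inter_eq_one[OF hom Psub fin cop transfer_eval[OF Psub P(2) fusion]]
      group_hom.normal_kernel[OF hom]
    by (intro exI[of _ "kernel G (G\<lparr>carrier := P\<rparr>) (transfer P)"]) simp
qed

end

lemma not_dvd_cofactor:
  fixes n m p :: nat
  assumes "m * p ^ multiplicity p n = n" "n \<noteq> 0" "Factorial_Ring.prime p"
  shows "\<not> p dvd m"
proof -
  have "m = n div p ^ multiplicity p n"
    using assms(1,3) by (metis nonzero_mult_div_cancel_right power_not_zero prime_gt_0_nat less_not_refl2)
  then show ?thesis
    using multiplicity_decompose[OF assms(2)] assms(3) not_prime_unit by blast
qed

lemma multiplicity_cofactor_eq:
  fixes n m p t :: nat
  assumes "m * p ^ multiplicity p n = n" "n \<noteq> 0" "Factorial_Ring.prime p"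
    and "Factorial_Ring.prime t" "t \<noteq> p"
  shows "multiplicity t m = multiplicity t n"
proof -
  have "m \<noteq> 0"
    using assms(1,2) by (metis mult_0)
  then have "multiplicity t n = multiplicity t m + multiplicity t (p ^ multiplicity p n)"
    using prime_elem_multiplicity_mult_distrib[of t m "p ^ multiplicity p n"] assms
    by (simp add: prime_gt_0_nat)
  then show ?thesis
    using multiplicity_distinct_prime_power[OF assms(4,3,5)] by simp
qed

context finite_group begin

lemma subgroup_eq_carrier_if_contains_sylows:
  assumes C: "subgroup C G"
    and sylows: "\<And>t. Factorial_Ring.prime t \<Longrightarrow> t dvd order G \<Longrightarrow> \<exists>T. sylow_subgroup G t T \<and> T \<subseteq> C"
  shows "C = carrier G"
proof -
  have CG: "C \<subseteq> carrier G"
    using subgroup.subset[OF C] .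
  have "card C \<noteq> 0"
    using C finite_subset[OF CG finite_carrier] subgroup.one_closed[OF C] by auto
  have "order G dvd card C"
  proof (rule multiplicity_le_imp_dvd[OF order_neq_0])
    fix t :: nat assume t: "Factorial_Ring.prime t"
    show "multiplicity t (order G) \<le> multiplicity t (card C)"
    proof (cases "t dvd order G")
      case True
      then obtain T where "sylow_subgroup G t T" "T \<subseteq> C"
        using sylows[OF t] by blast
      then have "t ^ multiplicity t (order G) dvd card C"
        using card_subgroup_dvd[OF _ C] unfolding sylow_subgroup_def by metis
      then show ?thesis
        using power_dvd_iff_le_multiplicity \<open>card C \<noteq> 0\<close> t not_prime_unit by blast
    next
      case False
      then show ?thesis
        using not_dvd_imp_multiplicity_0[OF False] by simp
    qed
  qed
  then have "order G \<le> card C"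
    using \<open>card C \<noteq> 0\<close> by (simp add: dvd_imp_le)
  then show ?thesis
    using CG finite_carrier card_seteq unfolding order_def by blast
qed

lemma sylow_normalized_by_p_subgroup:
  assumes M: "M \<lhd> G" "card M * p ^ multiplicity p (order G) = order G"
    and p: "Factorial_Ring.prime p" and t: "Factorial_Ring.prime t" "t \<noteq> p"
    and R: "subgroup R G" "card R = p ^ a"
  shows "\<exists>T. sylow_subgroup G t T \<and> R \<subseteq> normalizer G T"
proof -
  have MG: "subgroup M G"
    using normal_imp_subgroup[OF M(1)] .
  interpret M: finite_group "G\<lparr>carrier := M\<rparr>"
    using subgroup_imp_finite_group[OF MG] .
  obtain T where T: "sylow_subgroup (G\<lparr>carrier := M\<rparr>) t T"
    using M.sylow_subgroup_exists[OF t(1)] by blast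
  then have "sylow_subgroup G t T"
    using sylow_subgroup_restrict_iff[OF MG multiplicity_cofactor_eq[OF M(2) order_neq_0 p t]] by blast
  then have TG: "T \<subseteq> carrier G"
    unfolding sylow_subgroup_def using subgroup.subset by blast
  have N: "subgroup (normalizer G T) G"
    using normalizer_imp_subgroup[OF TG] .
  have "card (rcosets (normalizer G T)) dvd card M"
    using card_rcosets_dvd_of_set_mult_eq[OF N MG frattini_argument[OF M(1) T]] .
  then have "\<not> p dvd card (rcosets (normalizer G T))"
    using not_dvd_cofactor[OF M(2) order_neq_0 p] dvd_trans by blast
  then obtain h where h: "h \<in> carrier G" "R \<subseteq> h <# normalizer G T #> inv h"
    using p_subgroup_in_conj_of_coprime_index[OF R p N] by blast
  then have "R \<subseteq> normalizer G (h <# T #> inv h)"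
    using normalizer_conj[OF TG h(1)] by simp
  then show ?thesis
    using sylow_subgroup_conj[OF \<open>sylow_subgroup G t T\<close> h(1)] by blast
qed

end

section \<open>Groups whose order has three prime divisors\<close>

locale three_prime_group = finite_group +
  assumes three_primes: "\<And>t u. \<exists>s. Factorial_Ring.prime s \<and> s dvd order G \<and> s \<noteq> t \<and> s \<noteq> u"
begin

lemma sylow_subgroup_proper:
  assumes "sylow_subgroup G p P"
  shows "P \<noteq> carrier G"
proof
  assume "P = carrier G"
  obtain s where s: "Factorial_Ring.prime s" "s dvd order G" "s \<noteq> p"
    using three_primes by blast
  then have "s dvd p ^ multiplicity p (order G)"
    using assms \<open>P = carrier G\<close> unfolding sylow_subgroup_def order_def by simp
  then show False
    using s assms prime_dvd_power primes_dvd_imp_eq unfolding sylow_subgroup_def by blast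
qed

lemma set_mult_proper:
  assumes primes: "Factorial_Ring.prime t" "Factorial_Ring.prime p" "t \<noteq> p"
    and T: "subgroup T G" "card T dvd t ^ multiplicity t (order G)"
    and R: "subgroup R G" "card R dvd p ^ multiplicity p (order G)"
  shows "T <#> R \<noteq> carrier G"
proof
  assume TR: "T <#> R = carrier G"
  let ?m = "t ^ multiplicity t (order G) * p ^ multiplicity p (order G)"
  have "coprime (t ^ multiplicity t (order G)) (p ^ multiplicity p (order G))"
    using primes by (simp add: primes_coprime)
  then have m_dvd: "?m dvd order G"
    by (simp add: divides_mult multiplicity_dvd)
  have "order G \<le> card T * card R"
    using TR card_set_mult_le finite_carrier finite_subset subgroup.subset T(1) R(1)
    unfolding order_def by metis
  also have "\<dots> \<le> ?m"
    using T(2) R(2) primes by (intro mult_le_mono dvd_imp_le) (simp_all add: prime_gt_0_nat)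
  finally have "order G = ?m"
    using m_dvd order_neq_0 by (simp add: dvd_imp_le le_antisym)
  moreover obtain s where s: "Factorial_Ring.prime s" "s dvd order G" "s \<noteq> t" "s \<noteq> p"
    using three_primes by blast
  ultimately show False
    using primes prime_dvd_mult_iff prime_dvd_power primes_dvd_imp_eq by metis
qed

end

locale sylow_element = three_prime_group +
  fixes p P y
  assumes sylow: "sylow_subgroup G p P" and y_mem: "y \<in> P"
begin

lemma prime_p: "Factorial_Ring.prime p"
  using sylow unfolding sylow_subgroup_def by blast

lemma subgroup_P: "subgroup P G"
  using sylow unfolding sylow_subgroup_def by blast

lemma y_carrier: "y \<in> carrier G"
  using subgroup.mem_carrier[OF subgroup_P y_mem] .

lemma cyclic_subgroup: "subgroup (generate G {y}) G" "generate G {y} \<subseteq> P" "y \<in> generate G {y}"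
  using generate_is_subgroup[of "{y}"] y_carrier generate_subgroup_incl[OF _ subgroup_P] y_mem
    generate.incl[of y "{y}" G] by auto

lemma card_cyclic_subgroup: "card (generate G {y}) dvd p ^ multiplicity p (order G)"
  using card_subgroup_dvd[OF cyclic_subgroup(1) subgroup_P cyclic_subgroup(2)] sylow
  unfolding sylow_subgroup_def by simp

lemma sylow_set_mult_cyclic:
  assumes T: "sylow_subgroup G t T" "t \<noteq> p" and norm: "generate G {y} \<subseteq> normalizer G T"
  shows "subgroup (T <#> generate G {y}) G" "T <#> generate G {y} \<noteq> carrier G"
    "y \<in> T <#> generate G {y}" "T \<subseteq> T <#> generate G {y}"
proof -
  have TG: "subgroup T G" and t: "Factorial_Ring.prime t"
    using T(1) unfolding sylow_subgroup_def by blast+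
  show "subgroup (T <#> generate G {y}) G"
    using subgroup_set_mult_normalizer[OF TG cyclic_subgroup(1) norm] .
  show "T <#> generate G {y} \<noteq> carrier G"
    using set_mult_proper[OF t prime_p T(2) TG _ cyclic_subgroup(1) card_cyclic_subgroup] T(1)
    unfolding sylow_subgroup_def by simp
  show "y \<in> T <#> generate G {y}"
    using subset_set_mult_right[OF TG] cyclic_subgroup subgroup.subset by blast
  show "T \<subseteq> T <#> generate G {y}"
    using subset_set_mult_left[OF subgroup.subset[OF TG] cyclic_subgroup(1)] .
qed

end

section \<open>Elements of prime power order all of whose proper overgroups are abelian\<close>

locale abelian_overgroups = sylow_element +
  assumes overgroup_comm: "\<And>K. subgroup K G \<Longrightarrow> K \<noteq> carrier G \<Longrightarrow> y \<in> K \<Longrightarrow> comm_group (G\<lparr>carrier := K\<rparr>)"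
begin

lemma overgroup_subset_centralizer:
  assumes "subgroup K G" "K \<noteq> carrier G" "y \<in> K"
  shows "K \<subseteq> centralizer y"
  using overgroup_comm[OF assms] comm_group_subgroup_iff[OF assms(1)] assms subgroup.subset
  unfolding centralizer_def by blast

context
  assumes noncentral: "centralizer y \<noteq> carrier G"
begin

lemma centralizer_subgroup: "subgroup (centralizer y) G"
  using subgroup_centralizer[OF y_carrier] .

lemma centralizer_comm: "comm_group (G\<lparr>carrier := centralizer y\<rparr>)"
  using overgroup_comm[OF centralizer_subgroup noncentral] y_carrier by (simp add: centralizer_def)

lemma sylow_subset_centralizer: "P \<subseteq> centralizer y"
  using overgroup_subset_centralizer[OF subgroup_P sylow_subgroup_proper[OF sylow] y_mem] .

lemma centralizer_eq_if_noncentral: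
  assumes c: "c \<in> centralizer y" "centralizer c \<noteq> carrier G"
  shows "centralizer c = centralizer y"
proof
  have "c \<in> carrier G" "c \<otimes> y = y \<otimes> c"
    using c(1) unfolding centralizer_def by auto
  then show "centralizer c \<subseteq> centralizer y"
    using overgroup_subset_centralizer[OF subgroup_centralizer c(2)] y_carrier
    by (simp add: centralizer_def)
  show "centralizer y \<subseteq> centralizer c"
    using centralizer_comm comm_group_subgroup_iff[OF centralizer_subgroup] c(1)
    unfolding centralizer_def by blast
qed

lemma normalizer_centralizer_cases:
  "normalizer G (centralizer y) = centralizer y \<or> normalizer G (centralizer y) = carrier G"
proof -
  let ?N = "normalizer G (centralizer y)"
  have N: "subgroup ?N G"
    using normalizer_imp_subgroup subgroup.subset[OF centralizer_subgroup] by blast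
  have "centralizer y \<subseteq> ?N"
    using normal_imp_subgroup[OF subgroup_in_normalizer[OF centralizer_subgroup]] subgroup.subset
    by fastforce
  moreover have "y \<in> centralizer y"
    using y_carrier by (simp add: centralizer_def)
  ultimately show ?thesis
    using overgroup_subset_centralizer[OF N] by blast
qed

lemma sylow_in_centralizer_if_normal:
  assumes normal: "normalizer G (centralizer y) = carrier G"
    and t: "Factorial_Ring.prime t" "t \<noteq> p"
  shows "\<exists>T. sylow_subgroup G t T \<and> T \<subseteq> centralizer y"
proof -
  have C: "centralizer y \<subseteq> carrier G"
    by (auto simp: centralizer_def)
  have PG: "P \<subseteq> carrier G"
    using subgroup.subset[OF subgroup_P] .
  have "g \<in> normalizer G P" if g: "g \<in> carrier G" for g
  proof -
    have "g <# P #> inv g \<subseteq> g <# centralizer y #> inv g"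
      using sylow_subset_centralizer by (auto simp: conj_image)
    also have "\<dots> = centralizer y"
      using normal g mem_normalizer_iff[OF C] by blast
    finally have "P = g <# P #> inv g"
      using sylow_subgroup_unique_in_comm[OF centralizer_subgroup centralizer_comm sylow
          sylow_subset_centralizer sylow_subgroup_conj[OF sylow g]] by blast
    then show ?thesis
      using mem_normalizer_iff[OF PG] g by simp
  qed
  then have P_normal: "normalizer G P = carrier G"
    using normalizer_imp_subgroup[OF PG] subgroup.subset by blast
  obtain T where T: "sylow_subgroup G t T"
    using sylow_subgroup_exists[OF t(1)] by blast
  then have TG: "subgroup T G"
    unfolding sylow_subgroup_def by blast
  have K: "subgroup (P <#> T) G"
    using subgroup_set_mult_normalizer[OF subgroup_P TG] P_normal subgroup.subset[OF TG] by simp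
  moreover have "y \<in> P <#> T"
    using subset_set_mult_left[OF PG TG] y_mem by blast
  moreover have "P <#> T \<noteq> carrier G"
    using set_mult_proper[OF prime_p t(1) t(2)[symmetric] subgroup_P _ TG] sylow T
    unfolding sylow_subgroup_def by simp
  ultimately have "T \<subseteq> centralizer y"
    using overgroup_subset_centralizer subset_set_mult_right[OF subgroup_P subgroup.subset[OF TG]]
    by blast
  then show ?thesis
    using T by blast
qed

lemma fusion_if_self_normalizing:
  assumes self: "normalizer G (centralizer y) = centralizer y"
    and x: "x \<in> carrier G" and e: "e \<in> centralizer y" "x \<otimes> e \<otimes> inv x \<in> centralizer y"
  shows "x \<otimes> e \<otimes> inv x = e"
proof (cases "x \<otimes> e = e \<otimes> x")
  case True
  then show ?thesis
    using x e(1) by (simp add: centralizer_def m_assoc)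
next
  case False
  have eG: "e \<in> carrier G"
    using e(1) by (simp add: centralizer_def)
  have "centralizer e \<noteq> carrier G"
    using False x unfolding centralizer_def by auto
  moreover have "centralizer (x \<otimes> e \<otimes> inv x) \<noteq> carrier G"
  proof
    assume "centralizer (x \<otimes> e \<otimes> inv x) = carrier G"
    then have "x \<otimes> (x \<otimes> e \<otimes> inv x) = (x \<otimes> e \<otimes> inv x) \<otimes> x"
      using x unfolding centralizer_def by blast
    also have "\<dots> = x \<otimes> e"
      using x eG by (simp add: m_assoc)
    finally have "x \<otimes> e \<otimes> inv x = e"
      using x eG by simp
    moreover have "x \<otimes> e = (x \<otimes> e \<otimes> inv x) \<otimes> x"
      using x eG by (simp add: m_assoc)
    ultimately show False
      using False by simp
  qed
  ultimately have "centralizer e = centralizer y" "centralizer (x \<otimes> e \<otimes> inv x) = centralizer y"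
    using centralizer_eq_if_noncentral e by auto
  then have "x <# centralizer y #> inv x = centralizer y"
    using conj_centralizer[OF eG x] by simp
  then have "x \<in> centralizer y"
    using self mem_normalizer_iff[of "centralizer y" x] x by (auto simp: centralizer_def)
  then have "x \<otimes> e = e \<otimes> x"
    using centralizer_comm comm_group_subgroup_iff[OF centralizer_subgroup] e(1) by blast
  then show ?thesis
    using False by blast
qed

lemma normal_complement_if_self_normalizing:
  assumes self: "normalizer G (centralizer y) = centralizer y"
  obtains M where "M \<lhd> G" "M <#> P = carrier G" "M \<inter> P = {\<one>}"
proof -
  have "comm_group (G\<lparr>carrier := P\<rparr>)"
    using centralizer_comm sylow_subset_centralizer
    by (simp add: comm_group_subgroup_iff[OF subgroup_P] comm_group_subgroup_iff[OF centralizer_subgroup] subset_iff)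
  then show ?thesis
    using burnside_normal_complement[OF sylow] fusion_if_self_normalizing[OF self] sylow_subset_centralizer
      that by blast
qed

lemma sylow_in_centralizer_if_self_normalizing:
  assumes self: "normalizer G (centralizer y) = centralizer y"
    and t: "Factorial_Ring.prime t" "t \<noteq> p"
  shows "\<exists>T. sylow_subgroup G t T \<and> T \<subseteq> centralizer y"
proof -
  obtain M where M: "M \<lhd> G" "M <#> P = carrier G" "M \<inter> P = {\<one>}"
    using normal_complement_if_self_normalizing[OF self] .
  have "card M * p ^ multiplicity p (order G) = order G"
    using card_set_mult_disjoint[OF normal_imp_subgroup[OF M(1)] subgroup_P] M sylow
    unfolding sylow_subgroup_def order_def by simp
  moreover obtain a where "card (generate G {y}) = p ^ a"
    using card_cyclic_subgroup divides_primepow_nat[OF prime_p] by blast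
  ultimately obtain T where T: "sylow_subgroup G t T" "generate G {y} \<subseteq> normalizer G T"
    using sylow_normalized_by_p_subgroup[OF M(1) _ prime_p t cyclic_subgroup(1)] by blast
  then have "T <#> generate G {y} \<subseteq> centralizer y"
    using sylow_set_mult_cyclic[OF T(1) t(2) T(2)] overgroup_subset_centralizer by blast
  then show ?thesis
    using T(1) sylow_set_mult_cyclic(4)[OF T(1) t(2) T(2)] by blast
qed

lemma sylow_in_centralizer:
  assumes t: "Factorial_Ring.prime t"
  shows "\<exists>T. sylow_subgroup G t T \<and> T \<subseteq> centralizer y"
proof (cases "t = p")
  case True
  then show ?thesis
    using sylow sylow_subset_centralizer by blast
next
  case False
  then show ?thesis
    using normalizer_centralizer_cases sylow_in_centralizer_if_normal[OF _ t False]
      sylow_in_centralizer_if_self_normalizing[OF _ t False] by blast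
qed

end

theorem centralizer_eq_carrier: "centralizer y = carrier G"
  using subgroup_eq_carrier_if_contains_sylows[OF subgroup_centralizer[OF y_carrier]] sylow_in_centralizer
  by blast

end

section \<open>Exponent-critical groups\<close>

definition proper_nonabelian_exponent :: "('a, 'b) monoid_scheme \<Rightarrow> nat" where
  "proper_nonabelian_exponent G =
     Lcm ((\<lambda>H. grp_exponent (G\<lparr>carrier := H\<rparr>)) ` proper_nonabelian_subgroups G)"

context group begin

lemma ord_dvd_grp_exponent:
  assumes "subgroup H G" "x \<in> H"
  shows "ord x dvd grp_exponent (G\<lparr>carrier := H\<rparr>)"
  unfolding grp_exponent_def using assms by (simp add: ord_subgroup dvd_Lcm)

lemma proper_nonabelian_exponent_dvd: "proper_nonabelian_exponent G dvd grp_exponent G"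
  unfolding proper_nonabelian_exponent_def
proof (rule Lcm_least)
  fix n assume "n \<in> (\<lambda>H. grp_exponent (G\<lparr>carrier := H\<rparr>)) ` proper_nonabelian_subgroups G"
  then obtain H where H: "subgroup H G" "n = grp_exponent (G\<lparr>carrier := H\<rparr>)"
    unfolding proper_nonabelian_subgroups_def by blast
  have "group.ord (G\<lparr>carrier := H\<rparr>) ` carrier (G\<lparr>carrier := H\<rparr>) = ord ` H"
    using ord_subgroup[OF H(1)] by simp
  then show "n dvd grp_exponent G"
    unfolding H(2) grp_exponent_def using subgroup.subset[OF H(1)] by (simp add: Lcm_subset image_mono)
qed

lemma comm_group_if_ord_not_dvd:
  assumes "subgroup K G" "K \<noteq> carrier G" "z \<in> K" "\<not> ord z dvd proper_nonabelian_exponent G"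
  shows "comm_group (G\<lparr>carrier := K\<rparr>)"
proof (rule ccontr)
  assume "\<not> comm_group (G\<lparr>carrier := K\<rparr>)"
  then have "grp_exponent (G\<lparr>carrier := K\<rparr>) dvd proper_nonabelian_exponent G"
    using assms unfolding proper_nonabelian_exponent_def proper_nonabelian_subgroups_def
    by (auto intro: dvd_Lcm)
  then show False
    using ord_dvd_grp_exponent[OF assms(1,3)] assms(4) dvd_trans by blast
qed

lemma exponent_critical_witness:
  assumes fin: "finite (carrier G)" and crit: "exponent_critical G"
  shows "\<exists>p e y. Factorial_Ring.prime p \<and> y \<in> carrier G \<and> ord y = p ^ e
           \<and> \<not> p ^ e dvd proper_nonabelian_exponent G"
proof -
  let ?L = "proper_nonabelian_exponent G"
  obtain g where g: "g \<in> carrier G" "\<not> ord g dvd ?L"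
  proof (rule ccontr)
    assume "\<not> thesis"
    then have "grp_exponent G dvd ?L"
      using that unfolding grp_exponent_def by (auto intro: Lcm_least)
    then show False
      using crit proper_nonabelian_exponent_dvd dvd_antisym
      unfolding exponent_critical_def proper_nonabelian_exponent_def by blast
  qed
  have "ord g \<noteq> 0"
    using ord_ge_1[OF fin g(1)] by simp
  moreover have "?L \<noteq> 0"
    using g(2) by (metis dvd_0_right)
  ultimately obtain p where p: "Factorial_Ring.prime p" "\<not> p ^ multiplicity p (ord g) dvd ?L"
    using g(2) multiplicity_le_imp_dvd power_dvd_iff_le_multiplicity not_prime_unit by metis
  define k where "k = ord g div p ^ multiplicity p (ord g)"
  have ord_g: "ord g = p ^ multiplicity p (ord g) * k"
    unfolding k_def by (simp add: multiplicity_dvd)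
  then have "k dvd ord g" "k \<noteq> 0"
    using \<open>ord g \<noteq> 0\<close> by (metis dvd_triv_right, metis mult_0_right)
  moreover have "ord g div k = p ^ multiplicity p (ord g)"
    using ord_g \<open>k \<noteq> 0\<close> by (metis nonzero_mult_div_cancel_right)
  ultimately have "ord (g [^] k) = p ^ multiplicity p (ord g)"
    using ord_pow[OF g(1)] by simp
  then show ?thesis
    using p g(1) by blast
qed

lemma ord_mult_prime_power:
  assumes w: "w \<in> carrier G" and y: "y \<in> carrier G" and comm: "w \<otimes> y = y \<otimes> w"
    and p: "Factorial_Ring.prime p" and ord_y: "ord y = p ^ e" and ord_w: "ord w dvd p ^ j" and "j < e"
  shows "ord (w \<otimes> y) = p ^ e"
proof -
  have pow: "(w \<otimes> y) [^] (n::nat) = w [^] n \<otimes> y [^] n" for n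
    using pow_mult_distrib[OF comm w y] .
  have w_pow: "w [^] p ^ i = \<one>" if "j \<le> i" for i
    using ord_w le_imp_power_dvd[OF that] pow_eq_id[OF w] dvd_trans by metis
  have "(w \<otimes> y) [^] p ^ e = \<one>"
    using pow w_pow[of e] \<open>j < e\<close> ord_y y by (simp add: pow_eq_id)
  then obtain i where i: "i \<le> e" "ord (w \<otimes> y) = p ^ i"
    using pow_eq_id[of "w \<otimes> y"] w y divides_primepow_nat[OF p] by auto
  have "\<not> i < e"
  proof
    assume "i < e"
    then have "(w \<otimes> y) [^] p ^ (e - 1) = \<one>" "w [^] p ^ (e - 1) = \<one>"
      using i(2) w_pow[of "e - 1"] \<open>j < e\<close> pow_eq_id[of "w \<otimes> y"] w y
      by (auto simp: le_imp_power_dvd)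
    then have "y [^] p ^ (e - 1) = \<one>"
      using pow y by simp
    then have "p ^ e dvd p ^ (e - 1)"
      using pow_eq_id[OF y] ord_y by simp
    then show False
      using power_dvd_imp_le prime_gt_1_nat[OF p] \<open>i < e\<close> by fastforce
  qed
  then show ?thesis
    using i by simp
qed

lemma comm_group_of_set_mult_central:
  assumes MP: "carrier G = M <#> P" and M: "\<forall>a\<in>M. \<forall>b\<in>M. a \<otimes> b = b \<otimes> a"
    and P: "central_subset G P" and sub: "M \<subseteq> carrier G" "P \<subseteq> carrier G"
  shows "comm_group G"
proof (rule group_comm_groupI)
  fix a b assume "a \<in> carrier G" "b \<in> carrier G"
  then obtain m1 d1 m2 d2 where md: "m1 \<in> M" "d1 \<in> P" "a = m1 \<otimes> d1" "m2 \<in> M" "d2 \<in> P" "b = m2 \<otimes> d2"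
    using MP unfolding set_mult_def by blast
  then have G: "m1 \<in> carrier G" "d1 \<in> carrier G" "m2 \<in> carrier G" "d2 \<in> carrier G"
    using sub by auto
  have "a \<otimes> b = (m1 \<otimes> m2) \<otimes> (d1 \<otimes> d2)"
    using P md G unfolding central_subset_def by (simp add: m_assoc) (metis m_assoc)
  also have "\<dots> = (m2 \<otimes> m1) \<otimes> (d2 \<otimes> d1)"
    using M P md G unfolding central_subset_def by metis
  also have "\<dots> = b \<otimes> a"
    using P md G unfolding central_subset_def by (simp add: m_assoc) (metis m_assoc)
  finally show "a \<otimes> b = b \<otimes> a" .
qed

end

locale critical_sylow = sylow_element +
  fixes e
  assumes nonabelian: "\<not> comm_group G"
    and ord_y: "ord y = p ^ e" and ord_y_not_dvd: "\<not> p ^ e dvd proper_nonabelian_exponent G"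
begin

lemma centralizer_eq_carrier_if_ord_not_dvd:
  assumes "z \<in> P" "\<not> ord z dvd proper_nonabelian_exponent G"
  shows "centralizer z = carrier G"
proof -
  have "abelian_overgroups G p P z"
    by (intro abelian_overgroups.intro sylow_element.intro three_prime_group_axioms
        abelian_overgroups_axioms.intro sylow_element_axioms.intro sylow assms(1))
      (use comm_group_if_ord_not_dvd assms(2) in blast)
  then show ?thesis
    by (rule abelian_overgroups.centralizer_eq_carrier)
qed

lemma sylow_central: "central_subset G P"
  unfolding central_subset_def
proof (intro ballI)
  fix w x assume w: "w \<in> P" and x: "x \<in> carrier G"
  have wG: "w \<in> carrier G"
    using subgroup.mem_carrier[OF subgroup_P w] .
  have y_central: "centralizer y = carrier G"
    using centralizer_eq_carrier_if_ord_not_dvd[OF y_mem] ord_y ord_y_not_dvd by simp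
  show "w \<otimes> x = x \<otimes> w"
  proof (cases "ord w dvd proper_nonabelian_exponent G")
    case False
    then have "x \<in> centralizer w"
      using centralizer_eq_carrier_if_ord_not_dvd[OF w] x by simp
    then show ?thesis
      by (simp add: centralizer_def)
  next
    case True
    have "ord w dvd p ^ multiplicity p (order G)"
      using subgroup_P w ord_subgroup[OF subgroup_P] sylow
        group.ord_dvd_group_order[OF subgroup_imp_group[OF subgroup_P]]
      unfolding sylow_subgroup_def order_def by fastforce
    then obtain j where j: "ord w = p ^ j"
      using divides_primepow_nat[OF prime_p] by blast
    then have "j < e"
      using True ord_y_not_dvd le_imp_power_dvd dvd_trans by (metis not_less)
    moreover have wy: "w \<otimes> y = y \<otimes> w"
      using y_central wG unfolding centralizer_def by blast
    ultimately have "ord (w \<otimes> y) = p ^ e"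
      using ord_mult_prime_power[OF wG y_carrier _ prime_p ord_y, of j] j by simp
    then have "centralizer (w \<otimes> y) = carrier G"
      using centralizer_eq_carrier_if_ord_not_dvd[OF subgroup.m_closed[OF subgroup_P w y_mem]]
        ord_y_not_dvd by simp
    then have "x \<otimes> (w \<otimes> y) = (w \<otimes> y) \<otimes> x" "x \<otimes> y = y \<otimes> x"
      using x y_central unfolding centralizer_def by auto
    then have "w \<otimes> x \<otimes> y = x \<otimes> w \<otimes> y"
      using x wG y_carrier by (simp add: m_assoc)
    then show ?thesis
      using x wG y_carrier by simp
  qed
qed

lemma sylow_comm: "comm_group (G\<lparr>carrier := P\<rparr>)"
  using comm_group_if_ord_not_dvd[OF subgroup_P sylow_subgroup_proper[OF sylow] y_mem]
    ord_y ord_y_not_dvd by simp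

lemma normal_complement:
  obtains M where "M \<lhd> G" "M <#> P = carrier G" "M \<inter> P = {\<one>}"
proof -
  have "x \<otimes> e \<otimes> inv x = e" if "x \<in> carrier G" "e \<in> P" for x e
  proof -
    have "x \<otimes> e = e \<otimes> x"
      using sylow_central that unfolding central_subset_def by metis
    then show ?thesis
      using that subgroup.mem_carrier[OF subgroup_P] by (simp add: m_assoc)
  qed
  then show ?thesis
    using burnside_normal_complement[OF sylow sylow_comm] that by blast
qed

lemma sylow_eq_generate: "P = generate G {y}"
proof -
  obtain M where M: "M \<lhd> G" "M <#> P = carrier G" "M \<inter> P = {\<one>}"
    using normal_complement .
  have MG: "subgroup M G"
    using normal_imp_subgroup[OF M(1)] .
  have MR: "subgroup (M <#> generate G {y}) G"
    using mult_norm_subgroup[OF M(1) cyclic_subgroup(1)] .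
  have "M <#> generate G {y} = carrier G"
  proof (rule ccontr)
    assume "M <#> generate G {y} \<noteq> carrier G"
    moreover have "y \<in> M <#> generate G {y}"
      using subset_set_mult_right[OF MG] cyclic_subgroup subgroup.subset by blast
    ultimately have "comm_group (G\<lparr>carrier := M <#> generate G {y}\<rparr>)"
      using comm_group_if_ord_not_dvd[OF MR] ord_y ord_y_not_dvd by simp
    then have "\<forall>a\<in>M. \<forall>b\<in>M. a \<otimes> b = b \<otimes> a"
      using comm_group_subgroup_iff[OF MR] subset_set_mult_left[OF subgroup.subset[OF MG] cyclic_subgroup(1)]
      by blast
    then have "comm_group G"
      using comm_group_of_set_mult_central[OF M(2)[symmetric] _ sylow_central subgroup.subset[OF MG]
          subgroup.subset[OF subgroup_P]] by blast
    then show False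
      using nonabelian by simp
  qed
  then have "P \<subseteq> generate G {y}"
    using subgroup_subset_of_set_mult_eq[OF subgroup_P cyclic_subgroup(1,2) subgroup.subset[OF MG]] M(3)
      subgroup.subset[OF subgroup_P] by blast
  then show ?thesis
    using cyclic_subgroup(2) by blast
qed

lemma sylow_cyclic: "cyclic_group (G\<lparr>carrier := P\<rparr>)"
  using cyclic_group_generated[of y] y_carrier sylow_eq_generate
  by (simp add: subgroup_generated_def)

lemma sylow_nontrivial: "P \<noteq> {\<one>}"
proof
  assume "P = {\<one>}"
  then have "p ^ e = 1"
    using y_mem ord_y by simp
  then show False
    using ord_y_not_dvd by (metis one_dvd)
qed

lemma sylow_subgroups_comm:
  assumes Q: "sylow_subgroup G t Q"
  shows "comm_group (G\<lparr>carrier := Q\<rparr>)"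
proof (cases "t = p")
  case True
  then obtain g where g: "g \<in> carrier G" "Q = g <# P #> inv g"
    using sylow_subgroups_conj[OF sylow] Q by blast
  have "g <# P #> inv g = P"
    using sylow_central g(1) subgroup.subset[OF subgroup_P]
    unfolding central_subset_def by (intro conj_central) auto
  then show ?thesis
    using g sylow_comm by simp
next
  case False
  have QG: "subgroup Q G"
    using Q unfolding sylow_subgroup_def by blast
  have "generate G {y} \<subseteq> normalizer G Q"
    using cyclic_subgroup(2) sylow_central subgroup.subset[OF QG] subgroup.subset[OF subgroup_P]
      mem_normalizer_iff conj_central unfolding central_subset_def by (metis subsetD subsetI)
  note K = sylow_set_mult_cyclic[OF Q False this]
  then have "comm_group (G\<lparr>carrier := Q <#> generate G {y}\<rparr>)"
    using comm_group_if_ord_not_dvd[OF K(1,2,3)] ord_y ord_y_not_dvd by simp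
  then show ?thesis
    using comm_group_subgroup_iff[OF K(1)] comm_group_subgroup_iff[OF QG] K(4) by blast
qed

end

lemma prime_divisor_avoiding:
  fixes n :: nat
  assumes "\<exists>p q r. Factorial_Ring.prime p \<and> Factorial_Ring.prime q \<and> Factorial_Ring.prime r
             \<and> p \<noteq> q \<and> p \<noteq> r \<and> q \<noteq> r \<and> p dvd n \<and> q dvd n \<and> r dvd n"
  shows "\<exists>s. Factorial_Ring.prime s \<and> s dvd n \<and> s \<noteq> t \<and> s \<noteq> u"
  using assms by metis

theorem mainTheorem6:
  fixes G :: "('a, 'b) monoid_scheme"
  assumes "group G"
    and "finite (carrier G)"
    and "\<not> comm_group G"
    and "exponent_critical G"
    and "\<exists>p q r :: nat. Factorial_Ring.prime p \<and> Factorial_Ring.prime q \<and> Factorial_Ring.prime r \<and> p \<noteq> q \<and> p \<noteq> r \<and> q \<noteq> r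
           \<and> p dvd order G \<and> q dvd order G \<and> r dvd order G"
  shows "(\<exists>p P. sylow_subgroup G p P \<and> P \<noteq> {\<one>\<^bsub>G\<^esub>} \<and> central_subset G P
            \<and> cyclic_group (G\<lparr>carrier := P\<rparr>))
         \<and> (\<forall>p P. sylow_subgroup G p P \<longrightarrow> comm_group (G\<lparr>carrier := P\<rparr>))"
proof -
  interpret three_prime_group G
    using assms(1,2) prime_divisor_avoiding[OF assms(5)]
    by (simp add: three_prime_group_def three_prime_group_axioms_def finite_group_def finite_group_axioms_def)
  obtain p e y where y: "Factorial_Ring.prime p" "y \<in> carrier G" "ord y = p ^ e"
    "\<not> p ^ e dvd proper_nonabelian_exponent G"
    using exponent_critical_witness[OF assms(2,4)] by blast
  obtain P where P: "sylow_subgroup G p P" "y \<in> P"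
    using sylow_subgroup_containing[OF y(1-3)] by blast
  interpret critical_sylow G p P y e
    using assms(3) P y(3,4) by unfold_locales
  show ?thesis
    using sylow sylow_nontrivial sylow_central sylow_cyclic sylow_subgroups_comm by blast
qed

end
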